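(* Let $\mathcal H$ be an $As^c$-$Mag$-bialgebra. Then $\mathrm{Prim}\,\mathcal H$ is closed under the operations $\mu^n_i$ for all $n\ge3$ and $1\le i\le n-2$: if $x_1,\dots,x_n\in\mathrm{Prim}\,\mathcal H$ then $\mu^n_i(x_1,\dots,x_n)\in\mathrm{Prim}\,\mathcal H$.
   Context: An $As^c$-$Mag$-bialgebra is a vector space $\mathcal H$ over a field with a bilinear product $\cdot$ (not assumed associative) with two-sided unit $1$ and a coassociative counital coproduct $\Delta$ with $\Delta(1)=1\otimes1$ and $\Delta(x\cdot y)=\Delta(x)\cdot(1\otimes y)+(x\otimes1)\cdot\Delta(y)-x\otimes y$, the product on $\mathcal H\otimes\mathcal H$ being componentwise. $\mathrm{Prim}\,\mathcal H$ is the set of $x$ in the kernel of the counit with $\Delta(x)=x\otimes1+1\otimes x$. $\omega^1(x)=x$, $\omega^n(x_1,\dots,x_n)=\omega^{n-1}(x_1,\dots,x_{n-1})\cdot x_n$; $as(x,y,z)=(x\cdot y)\cdot z-x\cdot(y\cdot z)$; $\mu^3_1=as$; $\mu^n_1(x_1,\dots,x_n)=as(x_1,\omega^{n-2}(x_2,\dots,x_{n-1}),x_n)$ for $n\ge4$; $\mu^4_2(x_1,\dots,x_4)=as(x_1,x_2,x_3\cdot x_4)-as(x_1,x_2,x_3)\cdot x_4$; for $n\ge4$ and $2\le i\le n-2$, $\mu^n_i(x_1,\dots,x_n)=\mu^4_2(x_1,\omega^{n-i-1}(x_2,\dots,x_{n-i}),\omega^{i-1}(x_{n-i+1},\dots,x_{n-1}),x_n)$.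 *)

theory Defs
  imports Complex_Main
begin

text \<open>
  Elements of the
  tensor product H (x) H are represented by finite formal sums of elementary
  tensors, i.e. lists of pairs [(a1,b1),...,(an,bn)] standing for
  a1(x)b1 + ... + an(x)bn.  Two such sums denote the same element of H (x) H
  iff they agree under every pair of linear functionals f, g (the canonical map
  H (x) H -> Bil(H* x H*, k) is injective over a field).  Similarly for
  H (x) H (x) H.
\<close>

definition tev :: "('h \<Rightarrow> 'k::field) \<Rightarrow> ('h \<Rightarrow> 'k) \<Rightarrow> ('h \<times> 'h) list \<Rightarrow> 'k" where
  "tev f g xs = sum_list (map (\<lambda>(a, b). f a * g b) xs)"

definition teq :: "('k::field \<Rightarrow> 'h::ab_group_add \<Rightarrow> 'h) \<Rightarrow> ('h \<times> 'h) list \<Rightarrow> ('h \<times> 'h) list \<Rightarrow> bool" where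
  "teq scale xs ys \<longleftrightarrow>
     (\<forall>f g. Vector_Spaces.linear scale (*) f \<longrightarrow> Vector_Spaces.linear scale (*) g \<longrightarrow>
        tev f g xs = tev f g ys)"

definition tmul :: "('h \<Rightarrow> 'h \<Rightarrow> 'h) \<Rightarrow> ('h \<times> 'h) list \<Rightarrow> ('h \<times> 'h) list \<Rightarrow> ('h \<times> 'h) list" where
  "tmul m xs ys = concat (map (\<lambda>(a, b). map (\<lambda>(c, d). (m a c, m b d)) ys) xs)"

definition tscale :: "('k \<Rightarrow> 'h \<Rightarrow> 'h) \<Rightarrow> 'k \<Rightarrow> ('h \<times> 'h) list \<Rightarrow> ('h \<times> 'h) list" where
  "tscale scale c xs = map (\<lambda>(a, b). (scale c a, b)) xs"

definition tneg :: "('h::ab_group_add \<times> 'h) list \<Rightarrow> ('h \<times> 'h) list" where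
  "tneg xs = map (\<lambda>(a, b). (- a, b)) xs"

text \<open>(Delta (x) id) Delta x  and  (id (x) Delta) Delta x, evaluated on three linear functionals.\<close>
definition coassoc_left :: "('h \<Rightarrow> ('h \<times> 'h) list) \<Rightarrow> ('h \<Rightarrow> 'k::field) \<Rightarrow> ('h \<Rightarrow> 'k) \<Rightarrow> ('h \<Rightarrow> 'k) \<Rightarrow> 'h \<Rightarrow> 'k" where
  "coassoc_left D f g h x = sum_list (map (\<lambda>(a, b). tev f g (D a) * h b) (D x))"

definition coassoc_right :: "('h \<Rightarrow> ('h \<times> 'h) list) \<Rightarrow> ('h \<Rightarrow> 'k::field) \<Rightarrow> ('h \<Rightarrow> 'k) \<Rightarrow> ('h \<Rightarrow> 'k) \<Rightarrow> 'h \<Rightarrow> 'k" where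
  "coassoc_right D f g h x = sum_list (map (\<lambda>(a, b). f a * tev g h (D b)) (D x))"

definition asc_mag_bialgebra ::
  "('k::field \<Rightarrow> 'h::ab_group_add \<Rightarrow> 'h) \<Rightarrow> ('h \<Rightarrow> 'h \<Rightarrow> 'h) \<Rightarrow> 'h \<Rightarrow> ('h \<Rightarrow> 'k)
   \<Rightarrow> ('h \<Rightarrow> ('h \<times> 'h) list) \<Rightarrow> bool" where
  "asc_mag_bialgebra scale m one eps D \<longleftrightarrow>
     vector_space scale \<and>
     \<comment> \<open>bilinear product with two-sided unit\<close>
     (\<forall>x y z. m (x + y) z = m x z + m y z) \<and>
     (\<forall>x y z. m x (y + z) = m x y + m x z) \<and>
     (\<forall>c x y. m (scale c x) y = scale c (m x y)) \<and>
     (\<forall>c x y. m x (scale c y) = scale c (m x y)) \<and>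
     (\<forall>x. m one x = x) \<and> (\<forall>x. m x one = x) \<and>
     \<comment> \<open>linear counit\<close>
     Vector_Spaces.linear scale (*) eps \<and>
     \<comment> \<open>linear coproduct\<close>
     (\<forall>x y. teq scale (D (x + y)) (D x @ D y)) \<and>
     (\<forall>c x. teq scale (D (scale c x)) (tscale scale c (D x))) \<and>
     \<comment> \<open>coassociativity\<close>
     (\<forall>f g h x. Vector_Spaces.linear scale (*) f \<longrightarrow> Vector_Spaces.linear scale (*) g \<longrightarrow>
        Vector_Spaces.linear scale (*) h \<longrightarrow> coassoc_left D f g h x = coassoc_right D f g h x) \<and>
     \<comment> \<open>counitality\<close>
     (\<forall>x. sum_list (map (\<lambda>(a, b). scale (eps a) b) (D x)) = x) \<and>
     (\<forall>x. sum_list (map (\<lambda>(a, b). scale (eps b) a) (D x)) = x) \<and>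
     \<comment> \<open>Delta(1) = 1 (x) 1\<close>
     teq scale (D one) [(one, one)] \<and>
     \<comment> \<open>Delta(x.y) = Delta(x).(1(x)y) + (x(x)1).Delta(y) - x(x)y\<close>
     (\<forall>x y. teq scale (D (m x y))
        (tmul m (D x) [(one, y)] @ tmul m [(x, one)] (D y) @ tneg [(x, y)]))"

definition prim ::
  "('k::field \<Rightarrow> 'h::ab_group_add \<Rightarrow> 'h) \<Rightarrow> 'h \<Rightarrow> ('h \<Rightarrow> 'k) \<Rightarrow> ('h \<Rightarrow> ('h \<times> 'h) list) \<Rightarrow> 'h \<Rightarrow> bool" where
  "prim scale one eps D x \<longleftrightarrow> eps x = 0 \<and> teq scale (D x) [(x, one), (one, x)]"

definition omega :: "('h \<Rightarrow> 'h \<Rightarrow> 'h) \<Rightarrow> 'h list \<Rightarrow> 'h" where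
  "omega m xs = foldl m (hd xs) (tl xs)"

definition assoc :: "('h::ab_group_add \<Rightarrow> 'h \<Rightarrow> 'h) \<Rightarrow> 'h \<Rightarrow> 'h \<Rightarrow> 'h \<Rightarrow> 'h" where
  "assoc m x y z = m (m x y) z - m x (m y z)"

definition mu42 :: "('h::ab_group_add \<Rightarrow> 'h \<Rightarrow> 'h) \<Rightarrow> 'h \<Rightarrow> 'h \<Rightarrow> 'h \<Rightarrow> 'h \<Rightarrow> 'h" where
  "mu42 m x1 x2 x3 x4 = assoc m x1 x2 (m x3 x4) - m (assoc m x1 x2 x3) x4"

text \<open>mu^n_i(x1,...,xn) for a list xs = [x1,...,xn] (0-indexed: xs!0 = x1).
  i = 1: as(x1, omega(x2..x_{n-1}), xn)  (for n = 3 this is as(x1,x2,x3));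
  2 <= i <= n-2: mu42(x1, omega(x2..x_{n-i}), omega(x_{n-i+1}..x_{n-1}), xn).\<close>
definition mu :: "('h::ab_group_add \<Rightarrow> 'h \<Rightarrow> 'h) \<Rightarrow> nat \<Rightarrow> nat \<Rightarrow> 'h list \<Rightarrow> 'h" where
  "mu m n i xs =
     (if i = 1 then assoc m (xs ! 0) (omega m (take (n - 2) (drop 1 xs))) (xs ! (n - 1))
      else mu42 m (xs ! 0) (omega m (take (n - i - 1) (drop 1 xs)))
                 (omega m (take (i - 1) (drop (n - i) xs))) (xs ! (n - 1)))"

end

theory Submission
  imports Defs
begin

text \<open>
  For linear forms \<open>f, g\<close> consider the defect
  \<open>R\<^sub>u(f, g) = (f \<otimes> g)(\<Delta>u - u \<otimes> 1 - 1 \<otimes> u)\<close>; an element \<open>u\<close> is primitive iff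
  \<open>R\<^sub>u\<close> vanishes identically (the counit condition then comes for free).
  The compatibility relation becomes the Leibniz-type rule
  \<open>R\<^sub>u\<^sub>v(f, g) = R\<^sub>u(f, g(- \<cdot> v)) + R\<^sub>v(f(u \<cdot> -), g) + f(u) g(v)\<close>,
  so multiplying by a primitive element just moves the defect onto the other factor.
  For primitive \<open>x\<close> the defect of \<open>as(x, u, w)\<close> therefore only involves \<open>R\<^sub>w\<close>, and it
  vanishes when \<open>w\<close> is primitive too; the same bookkeeping handles \<open>\<mu>\<^sup>4\<^sub>2\<close>.  In particular only
  the outer arguments \<open>x\<^sub>1\<close> and \<open>x\<^sub>n\<close> of \<open>\<mu>\<^sup>n\<^sub>i\<close> need to be primitive.
\<close>

lemma tev_Nil [simp]: "tev f g [] = 0"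
  by (simp add: tev_def)

lemma tev_Cons [simp]: "tev f g ((a, b) # xs) = f a * g b + tev f g xs"
  by (simp add: tev_def)

lemma tev_append [simp]: "tev f g (xs @ ys) = tev f g xs + tev f g ys"
  by (simp add: tev_def)

lemma tev_tmul_unit_right:
  assumes "\<And>a. m a one = a"
  shows "tev f g (tmul m xs [(one, v)]) = tev f (\<lambda>b. g (m b v)) xs"
  using assms by (induction xs) (auto simp: tmul_def)

lemma tev_tmul_unit_left:
  assumes "\<And>a. m one a = a"
  shows "tev f g (tmul m [(u, one)] xs) = tev (\<lambda>c. f (m u c)) g xs"
  using assms by (induction xs) (auto simp: tmul_def)

lemma tev_tscale:
  assumes "\<And>a. f (scale c a) = c * f a"
  shows "tev f g (tscale scale c xs) = c * tev f g xs"
  using assms by (induction xs) (auto simp: tscale_def algebra_simps)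

locale asc_mag =
  fixes scale :: "'k::field \<Rightarrow> 'h::ab_group_add \<Rightarrow> 'h"
    and m :: "'h \<Rightarrow> 'h \<Rightarrow> 'h" and one :: 'h and eps :: "'h \<Rightarrow> 'k"
    and D :: "'h \<Rightarrow> ('h \<times> 'h) list"
  assumes bialgebra: "asc_mag_bialgebra scale m one eps D"
begin

abbreviation linear_form :: "('h \<Rightarrow> 'k) \<Rightarrow> bool" where
  "linear_form f \<equiv> Vector_Spaces.linear scale (*) f"

abbreviation primitive :: "'h \<Rightarrow> bool" where
  "primitive \<equiv> prim scale one eps D"

lemma vector_space: "vector_space scale"
  and mult_add_left: "m (x + y) z = m x z + m y z"
  and mult_add_right: "m x (y + z) = m x y + m x z"
  and mult_scale_left: "m (scale c x) y = scale c (m x y)"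
  and mult_scale_right: "m x (scale c y) = scale c (m x y)"
  and mult_one_left: "m one x = x"
  and mult_one_right: "m x one = x"
  and linear_eps: "linear_form eps"
  and coproduct_add: "teq scale (D (x + y)) (D x @ D y)"
  and coproduct_scale: "teq scale (D (scale c x)) (tscale scale c (D x))"
  and counit_left: "(\<Sum>(a, b)\<leftarrow>D x. scale (eps a) b) = x"
  and coproduct_one: "teq scale (D one) [(one, one)]"
  and coproduct_mult:
    "teq scale (D (m x y)) (tmul m (D x) [(one, y)] @ tmul m [(x, one)] (D y) @ tneg [(x, y)])"
  using bialgebra by (simp_all add: asc_mag_bialgebra_def)

lemma
  assumes "linear_form f"
  shows linear_form_add: "f (x + y) = f x + f y"
    and linear_form_scale: "f (scale c x) = c * f x"
    and linear_form_zero: "f 0 = 0"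
    and linear_form_neg: "f (- x) = - f x"
    and linear_form_diff: "f (x - y) = f x - f y"
  using module_hom_linearI[OF assms]
  by (simp_all add: module_hom.add module_hom.scale module_hom.zero module_hom.neg module_hom.diff)

lemma linear_mult_left: "Vector_Spaces.linear scale scale (m u)"
  by (simp add: Vector_Spaces.linear_iff vector_space mult_add_right mult_scale_right)

lemma linear_mult_right: "Vector_Spaces.linear scale scale (\<lambda>b. m b v)"
  by (simp add: Vector_Spaces.linear_iff vector_space mult_add_left mult_scale_left)

lemma linear_form_mult_left: "linear_form f \<Longrightarrow> linear_form (\<lambda>c. f (m u c))"
  using Vector_Spaces.linear_compose[OF linear_mult_left] by (simp add: comp_def)

lemma linear_form_mult_right: "linear_form g \<Longrightarrow> linear_form (\<lambda>b. g (m b v))"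
  using Vector_Spaces.linear_compose[OF linear_mult_right] by (simp add: comp_def)

lemma tev_teq:
  "teq scale xs ys \<Longrightarrow> linear_form f \<Longrightarrow> linear_form g \<Longrightarrow> tev f g xs = tev f g ys"
  by (simp add: teq_def)

lemma tev_coproduct_diff:
  assumes f: "linear_form f" and g: "linear_form g"
  shows "tev f g (D (x - y)) = tev f g (D x) - tev f g (D y)"
proof -
  interpret vector_space scale
    by (fact vector_space)
  have add: "tev f g (D (a + b)) = tev f g (D a) + tev f g (D b)" for a b
    using tev_teq[OF coproduct_add f g] by simp
  have scale: "tev f g (D (scale c a)) = c * tev f g (D a)" for c a
    using tev_teq[OF coproduct_scale f g] by (simp add: tev_tscale linear_form_scale[OF f])
  have "tev f g (D (x - y)) = tev f g (D (x + scale (-1) y))"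
    by simp
  also have "\<dots> = tev f g (D x) - tev f g (D y)"
    by (simp only: add scale) simp
  finally show ?thesis .
qed

lemma tev_coproduct_mult:
  assumes f: "linear_form f" and g: "linear_form g"
  shows "tev f g (D (m u v)) =
    tev f (\<lambda>b. g (m b v)) (D u) + tev (\<lambda>c. f (m u c)) g (D v) - f u * g v"
  using tev_teq[OF coproduct_mult f g]
  by (simp add: tev_tmul_unit_right tev_tmul_unit_left mult_one_left mult_one_right
      tneg_def linear_form_neg[OF f])

definition defect :: "'h \<Rightarrow> ('h \<Rightarrow> 'k) \<Rightarrow> ('h \<Rightarrow> 'k) \<Rightarrow> 'k" where
  "defect u f g = tev f g (D u) - f u * g one - f one * g u"

lemma defect_diff:
  assumes f: "linear_form f" and g: "linear_form g"
  shows "defect (x - y) f g = defect x f g - defect y f g"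
  by (simp add: defect_def tev_coproduct_diff[OF f g] linear_form_diff[OF f] linear_form_diff[OF g]
      algebra_simps)

lemma defect_mult:
  "linear_form f \<Longrightarrow> linear_form g \<Longrightarrow>
   defect (m u v) f g = defect u f (\<lambda>b. g (m b v)) + defect v (\<lambda>c. f (m u c)) g + f u * g v"
  by (simp add: defect_def tev_coproduct_mult mult_one_left mult_one_right algebra_simps)

lemma defect_primitive:
  "primitive x \<Longrightarrow> linear_form f \<Longrightarrow> linear_form g \<Longrightarrow> defect x f g = 0"
  by (auto simp: prim_def defect_def dest: tev_teq)

lemma eps_eq_tev_coproduct: "eps v = tev eps eps (D v)"
proof -
  have "eps (\<Sum>(a, b)\<leftarrow>xs. scale (eps a) b) = tev eps eps xs" for xs
    by (induction xs) (auto simp: linear_form_zero linear_form_add linear_form_scale linear_eps)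
  from this[of "D v"] show ?thesis
    by (simp only: counit_left)
qed

lemma eps_eq_0_if_coproduct_primitive:
  assumes "teq scale (D w) [(w, one), (one, w)]"
  shows "eps w = 0"
proof -
  have "eps one = eps one * eps one"
    using eps_eq_tev_coproduct tev_teq[OF coproduct_one linear_eps linear_eps] by simp
  then consider "eps one = 0" | "eps one = 1"
    by (metis mult_cancel_left2)
  moreover have "eps w = eps w * eps one + eps one * eps w"
    using eps_eq_tev_coproduct tev_teq[OF assms linear_eps linear_eps] by simp
  ultimately show ?thesis
    by cases (simp_all only: mult_zero_left mult_zero_right mult_1_left mult_1_right
        add_0 add_cancel_right_right)
qed

lemma primitive_if_defect_vanishes:
  assumes "\<And>f g. linear_form f \<Longrightarrow> linear_form g \<Longrightarrow> defect w f g = 0"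
  shows "primitive w"
proof -
  have "teq scale (D w) [(w, one), (one, w)]"
    using assms by (simp add: teq_def defect_def algebra_simps)
  with eps_eq_0_if_coproduct_primitive show ?thesis
    by (simp add: prim_def)
qed

lemma defect_mult_primitive_left:
  "primitive x \<Longrightarrow> linear_form f \<Longrightarrow> linear_form g \<Longrightarrow>
   defect (m x w) f g = defect w (\<lambda>c. f (m x c)) g + f x * g w"
  by (simp add: defect_mult defect_primitive linear_form_mult_right)

lemma defect_mult_primitive_right:
  "primitive z \<Longrightarrow> linear_form f \<Longrightarrow> linear_form g \<Longrightarrow>
   defect (m w z) f g = defect w f (\<lambda>b. g (m b z)) + f w * g z"
  by (simp add: defect_mult defect_primitive linear_form_mult_left)

lemma defect_assoc_primitive_left:
  assumes x: "primitive x" and f: "linear_form f" and g: "linear_form g"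
  shows "defect (assoc m x u w) f g =
    defect w (\<lambda>c. f (m (m x u) c)) g - defect w (\<lambda>c. f (m x (m u c))) g"
proof -
  have "defect (m (m x u) w) f g =
      defect u (\<lambda>c. f (m x c)) (\<lambda>b. g (m b w)) + f x * g (m u w)
      + defect w (\<lambda>c. f (m (m x u) c)) g + f (m x u) * g w"
    by (simp add: defect_mult defect_mult_primitive_left defect_primitive x f g
        linear_form_mult_right linear_form_mult_right[OF linear_form_mult_right[OF g]])
  moreover have "defect (m x (m u w)) f g =
      defect u (\<lambda>c. f (m x c)) (\<lambda>b. g (m b w)) + defect w (\<lambda>c. f (m x (m u c))) g
      + f (m x u) * g w + f x * g (m u w)"
    by (simp add: defect_mult defect_mult_primitive_left defect_primitive x f g
        linear_form_mult_left linear_form_mult_right)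
  ultimately show ?thesis
    by (simp add: assoc_def defect_diff f g)
qed

lemma primitive_assoc:
  assumes x: "primitive x" and z: "primitive z"
  shows "primitive (assoc m x u z)"
proof (rule primitive_if_defect_vanishes)
  fix f g assume f: "linear_form f" and g: "linear_form g"
  show "defect (assoc m x u z) f g = 0"
    by (simp add: defect_assoc_primitive_left defect_primitive x z f g
        linear_form_mult_left linear_form_mult_left[OF linear_form_mult_left[OF f]])
qed

lemma primitive_mu42:
  assumes x: "primitive x" and z: "primitive z"
  shows "primitive (mu42 m x u v z)"
proof (rule primitive_if_defect_vanishes)
  fix f g assume f: "linear_form f" and g: "linear_form g"
  define F1 where "F1 c = f (m (m x u) c)" for c
  define F2 where "F2 c = f (m x (m u c))" for c
  have F: "linear_form F1" "linear_form F2"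
    unfolding F1_def F2_def
    by (simp_all add: f linear_form_mult_left linear_form_mult_left[OF linear_form_mult_left[OF f]])
  have "defect (assoc m x u (m v z)) f g =
      defect v F1 (\<lambda>b. g (m b z)) - defect v F2 (\<lambda>b. g (m b z)) + (F1 v - F2 v) * g z"
    unfolding defect_assoc_primitive_left[OF x f g] F1_def[symmetric] F2_def[symmetric]
    by (simp add: defect_mult_primitive_right z F g algebra_simps)
  moreover have "f (assoc m x u v) = F1 v - F2 v"
    by (simp add: F1_def F2_def assoc_def linear_form_diff f)
  then have "defect (m (assoc m x u v) z) f g =
      defect v F1 (\<lambda>b. g (m b z)) - defect v F2 (\<lambda>b. g (m b z)) + (F1 v - F2 v) * g z"
    unfolding defect_mult_primitive_right[OF z f g]
      defect_assoc_primitive_left[OF x f linear_form_mult_right[OF g]] F1_def F2_def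
    by simp
  ultimately show "defect (mu42 m x u v z) f g = 0"
    by (simp add: mu42_def defect_diff f g)
qed

end

theorem proposition2p8:
  fixes scale :: "'k::field \<Rightarrow> 'h::ab_group_add \<Rightarrow> 'h"
    and m :: "'h \<Rightarrow> 'h \<Rightarrow> 'h" and one :: 'h and eps :: "'h \<Rightarrow> 'k"
    and D :: "'h \<Rightarrow> ('h \<times> 'h) list"
    and n i :: nat and xs :: "'h list"
  assumes "asc_mag_bialgebra scale m one eps D"
    and "3 \<le> n" and "1 \<le> i" and "i \<le> n - 2"
    and "length xs = n"
    and "\<forall>x\<in>set xs. prim scale one eps D x"
  shows "prim scale one eps D (mu m n i xs)"
proof -
  interpret asc_mag scale m one eps D
    using assms(1) by (rule asc_mag.intro)
  have ends: "primitive (xs ! 0)" "primitive (xs ! (n - 1))"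
    using assms(2,5,6) by auto
  show ?thesis
    using ends by (simp add: mu_def primitive_assoc primitive_mu42)
qed

end
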